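(* Let $(D,v^* )$ be an instance of TFP that is special with respect to $a^*\in N_{\mathrm{out}}(v^* )$ and $b^*\in N_{\mathrm{in}}(v^* )$, and let $m=|N_{\mathrm{in}}(v^* )|=2^p$ (so $|V(D)|=4m=2^{p+2}$ and the knockout tournament has $p+2$ rounds). Write $A=N_{\mathrm{out}}(v^* )$ and $B=N_{\mathrm{in}}(v^* )$. Suppose $(D,v^* )$ is a yes-instance, let $\sigma$ be an arbitrary winning seeding for $v^*$, and let $\{M_1,\dots,M_{p+2}\}$ be its match set sequence. Then: (1) $V(M_{p+1})\cap B=\{b^*\}$; (2) $|V(M_{p+1})\cap A|=2$ and $a^*\in V(M_{p+1})$; (3) for every round $r\in\{1,\dots,p\}$, every match in $M_r$ is played either between two players of $A\cup\{v^*\}$ or between two players of $B$.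
   Context: A tournament is a digraph $D=(V,E)$ in which for every pair of distinct vertices $u,v$ exactly one of the arcs $(u,v),(v,u)$ is present; $(u,v)\in E$ means $u$ beats $v$. $N_{\mathrm{out}}(v)=\{u:(v,u)\in E\}$, $N_{\mathrm{in}}(v)=\{u:(u,v)\in E\}$. A knockout tournament on $n=2^c$ players is a complete binary tree with $n$ leaves; a seeding is a bijection from players to leaves; in each of the $\log_2 n$ rounds the winners of sibling subtrees play each other and the winner (according to $D$) advances; the last remaining player is the champion. A seeding is winning for $v^*$ if $v^*$ is the champion. The Tournament Fixing Problem (TFP): given a tournament $D$ with $|V(D)|$ a power of two and $v^*\in V(D)$, decide whether a winning seeding for $v^*$ exists; $(D,v^* )$ is a yes-instance if so. For a seeding, the match set $M_r\subseteq E(D)$ of round $r$ is the set of arcs $(u,v)$ such that $u$ beat $v$ in round $r$, and $V(M_r)$ is the set of players participating in round $r$; $\{M_1,\dots,M_{\log n}\}$ is the match set sequence. An instance $(D,v^* )$ is special with respect to $a^*\in N_{\mathrm{out}}(v^* )$ and $b^*\in N_{\mathrm{in}}(v^* )$ if: (i) $|N_{\mathrm{out}}(v^* )|=3|N_{\mathrm{in}}(v^* )|-1$ and $|N_{\mathrm{in}}(v^* )|=2^p$ for some integer $p\ge 0$; (ii) $(a^*,b^* )\in E(D)$; (iii) for every $a\in N_{\mathrm{out}}(v^* )$ and $b\in N_{\mathrm{in}}(v^* )$ with $(a,b)\neq(a^*,b^* )$, we have $(b,a)\in E(D)$. *)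

theory Defs
  imports Main
begin

text \<open>A tournament on the finite vertex set V with arc set E; (u,v) in E means u beats v.\<close>
definition tournament :: "'a set \<Rightarrow> ('a \<times> 'a) set \<Rightarrow> bool" where
  "tournament V E \<longleftrightarrow> finite V \<and> E \<subseteq> V \<times> V \<and>
     (\<forall>u\<in>V. \<forall>w\<in>V. u \<noteq> w \<longrightarrow> ((u,w) \<in> E \<longleftrightarrow> (w,u) \<notin> E)) \<and>
     (\<forall>u\<in>V. (u,u) \<notin> E)"

definition N_out :: "('a \<times> 'a) set \<Rightarrow> 'a \<Rightarrow> 'a set" where
  "N_out E v = {u. (v,u) \<in> E}"

definition N_in :: "('a \<times> 'a) set \<Rightarrow> 'a \<Rightarrow> 'a set" where
  "N_in E v = {u. (u,v) \<in> E}"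

definition TFP_instance :: "'a set \<Rightarrow> ('a \<times> 'a) set \<Rightarrow> 'a \<Rightarrow> bool" where
  "TFP_instance V E v \<longleftrightarrow> tournament V E \<and> (\<exists>c. card V = 2 ^ c) \<and> v \<in> V"

definition match_winner :: "('a \<times> 'a) set \<Rightarrow> 'a \<Rightarrow> 'a \<Rightarrow> 'a" where
  "match_winner E u w = (if (u,w) \<in> E then u else w)"

text \<open>A seeding is represented by the map s from leaf positions 0..<n (left to right in the
  complete binary tree) to players; it is a seeding iff it is a bijection onto V.
  ko_win E s j k is the player that has won the subtree at height j with index k,
  i.e. whose leaves are k*2^j ..< (k+1)*2^j.\<close>
fun ko_win :: "('a \<times> 'a) set \<Rightarrow> (nat \<Rightarrow> 'a) \<Rightarrow> nat \<Rightarrow> nat \<Rightarrow> 'a" where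
  "ko_win E s 0 k = s k"
| "ko_win E s (Suc j) k = match_winner E (ko_win E s j (2*k)) (ko_win E s j (2*k+1))"

definition seeding :: "'a set \<Rightarrow> (nat \<Rightarrow> 'a) \<Rightarrow> bool" where
  "seeding V s \<longleftrightarrow> bij_betw s {0..<card V} V"

definition winning_seeding :: "'a set \<Rightarrow> ('a \<times> 'a) set \<Rightarrow> 'a \<Rightarrow> (nat \<Rightarrow> 'a) \<Rightarrow> bool" where
  "winning_seeding V E v s \<longleftrightarrow> seeding V s \<and> (\<exists>c. card V = 2 ^ c \<and> ko_win E s c 0 = v)"

definition yes_instance :: "'a set \<Rightarrow> ('a \<times> 'a) set \<Rightarrow> 'a \<Rightarrow> bool" where
  "yes_instance V E v \<longleftrightarrow> (\<exists>s. winning_seeding V E v s)"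

definition match_set :: "('a \<times> 'a) set \<Rightarrow> (nat \<Rightarrow> 'a) \<Rightarrow> nat \<Rightarrow> nat \<Rightarrow> ('a \<times> 'a) set" where
  "match_set E s n r =
     {(let u = ko_win E s (r-1) (2*k); w = ko_win E s (r-1) (2*k+1)
       in if (u,w) \<in> E then (u,w) else (w,u)) | k. k < n div 2 ^ r}"

definition match_players :: "('a \<times> 'a) set \<Rightarrow> 'a set" where
  "match_players M = fst ` M \<union> snd ` M"

definition special :: "'a set \<Rightarrow> ('a \<times> 'a) set \<Rightarrow> 'a \<Rightarrow> 'a \<Rightarrow> 'a \<Rightarrow> bool" where
  "special V E v a b \<longleftrightarrow>
     a \<in> N_out E v \<and> b \<in> N_in E v \<and>
     card (N_out E v) = 3 * card (N_in E v) - 1 \<and> (\<exists>p. card (N_in E v) = 2 ^ p) \<and>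
     (a,b) \<in> E \<and>
     (\<forall>a'\<in>N_out E v. \<forall>b'\<in>N_in E v. (a',b') \<noteq> (a,b) \<longrightarrow> (b',a') \<in> E)"

end

theory Submission
  imports Defs
begin

(* Call B = N_in v* the block. A player of the block beats every outsider, except that b* loses
   to a*. Hence a subtree of the bracket that meets the block but does not contain b* is won by a
   block player; following the bracket upwards from the leaves one sees that, since the champion v*
   is an outsider, the whole block lies in a single subtree won by b*, which is then eliminated
   by a*. The block has 2^p players, so that subtree has height at least p, and height p+1 is
   excluded because a* would then be champion. So the block is exactly one of the four subtrees
   of height p, which yields all three claims. *)

section \<open>Tournaments\<close>

(* tournament_def must not be handed to the simplifier: its arc condition rewrites
   (u,w) \<in> E to (w,u) \<notin> E and back, so simp and auto loop. *)
lemma tournament_arc_iff: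
  assumes "tournament V E" "u \<in> V" "w \<in> V" "u \<noteq> w"
  shows "(u,w) \<in> E \<longleftrightarrow> (w,u) \<notin> E"
  using assms unfolding tournament_def
  by (elim conjE) (drule bspec, assumption, drule bspec, assumption, blast)

lemma tournament_irrefl: "tournament V E \<Longrightarrow> (u,u) \<notin> E"
  unfolding tournament_def by (elim conjE) blast

lemma tournament_arc_in:
  assumes "tournament V E" "(u,w) \<in> E"
  shows "u \<in> V" "w \<in> V"
  using assms unfolding tournament_def by (elim conjE; blast)+

lemma match_winner_beats:
  assumes "tournament V E" "u \<in> V" "w \<in> V" "x \<in> {u,w}" "x \<noteq> match_winner E u w"
  shows "(match_winner E u w, x) \<in> E"
proof (cases "(u,w) \<in> E")
  case False
  then have "x = u" "u \<noteq> w"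
    using assms(4,5) unfolding match_winner_def by auto
  then show ?thesis
    using False tournament_arc_iff[OF assms(1-3)] unfolding match_winner_def by simp
qed (use assms(4,5) in \<open>auto simp: match_winner_def\<close>)

lemma tournament_neighbourhoods:
  assumes "tournament V E" "v \<in> V"
  shows "V = insert v (N_out E v \<union> N_in E v)" "N_out E v \<inter> N_in E v = {}"
    and "v \<notin> N_out E v" "v \<notin> N_in E v"
proof -
  show "v \<notin> N_out E v" "v \<notin> N_in E v"
    using tournament_irrefl[OF assms(1)] unfolding N_out_def N_in_def by auto
  show "N_out E v \<inter> N_in E v = {}"
    using tournament_arc_iff[OF assms] tournament_irrefl[OF assms(1)] tournament_arc_in[OF assms(1)]
    unfolding N_out_def N_in_def by blast
  show "V = insert v (N_out E v \<union> N_in E v)"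
    using tournament_arc_iff[OF assms] tournament_arc_in[OF assms(1)] assms(2)
    unfolding N_out_def N_in_def by blast
qed

lemma card_tournament:
  assumes "tournament V E" "v \<in> V"
  shows "card V = Suc (card (N_out E v) + card (N_in E v))"
proof -
  note partition = tournament_neighbourhoods[OF assms]
  have "finite V"
    using assms(1) unfolding tournament_def by (elim conjE)
  then have "finite (N_out E v)" "finite (N_in E v)"
    using partition(1) by (metis finite_subset sup_ge1 sup_ge2 subset_insertI2)+
  then have "card (insert v (N_out E v \<union> N_in E v)) = Suc (card (N_out E v) + card (N_in E v))"
    using partition(2-4) by (simp add: card_Un_disjoint)
  then show ?thesis
    using partition(1) by simp
qed

lemma special_in_neighbours_lose_only_b_to_a:
  assumes "tournament V E" "special V E v a b"
    and "x \<in> N_in E v" "y \<in> V" "y \<notin> N_in E v" "(y,x) \<in> E"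
  shows "y = a \<and> x = b"
proof (rule ccontr)
  assume "\<not> (y = a \<and> x = b)"
  have "(x,v) \<in> E"
    using assms(3) unfolding N_in_def by simp
  then have "v \<in> V" "x \<in> V"
    using tournament_arc_in[OF assms(1)] by auto
  moreover have "x \<noteq> v"
    using \<open>(x,v) \<in> E\<close> tournament_irrefl[OF assms(1)] by blast
  ultimately have "y \<noteq> v"
    using \<open>(x,v) \<in> E\<close> assms(6) tournament_arc_iff[OF assms(1)] by blast
  then have "y \<in> N_out E v"
    using tournament_neighbourhoods(1)[OF assms(1) \<open>v \<in> V\<close>] assms(4,5) by blast
  then have "(x,y) \<in> E"
    using assms(2,3) \<open>\<not> (y = a \<and> x = b)\<close> unfolding special_def by (elim conjE) blast
  moreover have "x \<noteq> y"
    using assms(3,5) by blast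
  ultimately show False
    using tournament_arc_iff[OF assms(1) \<open>x \<in> V\<close> assms(4)] assms(6) by simp
qed

section \<open>Subtrees of the bracket\<close>

definition subtree_players :: "(nat \<Rightarrow> 'a) \<Rightarrow> nat \<Rightarrow> nat \<Rightarrow> 'a set" where
  "subtree_players s j k = s ` {k*2^j..<(k+1)*2^j}"

lemma subtree_players_Suc:
  "subtree_players s (Suc j) k = subtree_players s j (2*k) \<union> subtree_players s j (2*k+1)"
proof -
  have "{k*2^Suc j..<(k+1)*2^Suc j} = {2*k*2^j..<(2*k+1)*2^j} \<union> {(2*k+1)*2^j..<(2*k+1+1)*2^j}"
    by (auto simp: algebra_simps)
  then show ?thesis
    unfolding subtree_players_def by (simp add: image_Un)
qed

lemma subtree_players_ancestor:
  "subtree_players s i q \<subseteq> subtree_players s (i+d) (q div 2^d)"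
proof (induction d)
  case (Suc d)
  define r where "r = q div 2^d"
  have "q div 2^Suc d = r div 2"
    unfolding r_def by (metis div_mult2_eq power_Suc2)
  moreover have "r = 2*(r div 2) \<or> r = 2*(r div 2) + 1"
    by presburger
  ultimately show ?case
    using Suc subtree_players_Suc[of s "i+d" "r div 2"] unfolding r_def by auto
qed simp

lemma subtree_descendant_fits:
  assumes "(q div 2^d + 1) * 2^(i+d) \<le> (n::nat)"
  shows "(q+1) * 2^i \<le> n"
proof -
  have "q < (q div 2^d + 1) * 2^d"
    using div_less_iff_less_mult[of "2^d" q "q div 2^d + 1"] by simp
  then have "(q+1) * 2^i \<le> (q div 2^d + 1) * 2^d * 2^i"
    by (intro mult_le_mono1) simp
  also have "\<dots> = (q div 2^d + 1) * 2^(i+d)"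
    by (simp add: power_add algebra_simps)
  finally show ?thesis
    using assms by simp
qed

lemma ko_win_Suc_in: "ko_win E s (Suc j) k \<in> {ko_win E s j (2*k), ko_win E s j (2*k+1)}"
  by (simp add: match_winner_def)

lemma ko_win_in_subtree_players: "ko_win E s j k \<in> subtree_players s j k"
proof (induction j arbitrary: k)
  case 0
  then show ?case by (simp add: subtree_players_def)
next
  case (Suc j)
  then show ?case
    using ko_win_Suc_in[of E s j k] subtree_players_Suc[of s j k] by auto
qed

lemma match_set_in_subtree_players:
  assumes "(x,y) \<in> match_set E s n r" "r \<ge> 1"
  obtains k where "k < n div 2^r" "{x,y} \<subseteq> subtree_players s r k"
proof -
  obtain j where r: "r = Suc j"
    using assms(2) by (cases r) auto
  obtain k where "k < n div 2^r" and "(x,y) = (let u = ko_win E s j (2*k); w = ko_win E s j (2*k+1)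
      in if (u,w) \<in> E then (u,w) else (w,u))"
    using assms(1) unfolding match_set_def r by auto
  then have "k < n div 2^r" "{x,y} \<subseteq> {ko_win E s j (2*k), ko_win E s j (2*k+1)}"
    by (auto simp: Let_def split: if_splits)
  moreover have "{ko_win E s j (2*k), ko_win E s j (2*k+1)} \<subseteq> subtree_players s r k"
    using ko_win_in_subtree_players[of E s j] subtree_players_Suc[of s j k] r by blast
  ultimately show thesis
    using that[of k] by blast
qed

lemma lessThan_double: "{..<2*N} = (\<Union>k<N. {2*k, 2*k+1::nat})"
proof (intro equalityI subsetI)
  fix i assume "i \<in> {..<2*N}"
  then have "i div 2 < N" "i = 2*(i div 2) \<or> i = 2*(i div 2)+1"
    by auto
  then show "i \<in> (\<Union>k<N. {2*k, 2*k+1})"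
    by blast
qed auto

lemma match_players_match_set:
  "match_players (match_set E s n r) = ko_win E s (r-1) ` {..<2*(n div 2^r)}"
proof -
  let ?W = "ko_win E s (r-1)"
  define arc where
    "arc k = (if (?W (2*k), ?W (2*k+1)) \<in> E then (?W (2*k), ?W (2*k+1)) else (?W (2*k+1), ?W (2*k)))"
    for k
  have "match_set E s n r = arc ` {..<n div 2^r}"
    unfolding match_set_def arc_def Let_def by blast
  then have "match_players (match_set E s n r) = (\<Union>k<n div 2^r. {fst (arc k), snd (arc k)})"
    unfolding match_players_def by auto
  also have "\<dots> = (\<Union>k<n div 2^r. ?W ` {2*k, 2*k+1})"
    unfolding arc_def by auto
  also have "\<dots> = ?W ` {..<2*(n div 2^r)}"
    unfolding lessThan_double by blast
  finally show ?thesis .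
qed

locale knockout =
  fixes V :: "'a set" and E :: "('a \<times> 'a) set" and s :: "nat \<Rightarrow> 'a"
  assumes is_tournament: "tournament V E"
    and is_seeding: "seeding V s"
begin

lemma inj_on_seeding: "inj_on s {0..<card V}"
  and image_seeding: "s ` {0..<card V} = V"
  using is_seeding unfolding seeding_def bij_betw_def by auto

lemma subtree_players_subset: "(k+1)*2^j \<le> card V \<Longrightarrow> subtree_players s j k \<subseteq> V"
  unfolding subtree_players_def using image_seeding by auto

lemma subtree_players_root: "card V = 2^c \<Longrightarrow> subtree_players s c 0 = V"
  unfolding subtree_players_def using image_seeding by simp

lemma ko_win_in_V: "(k+1)*2^j \<le> card V \<Longrightarrow> ko_win E s j k \<in> V"
  using ko_win_in_subtree_players subtree_players_subset by blast

lemma card_subtree_players: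
  assumes "(k+1)*2^j \<le> card V"
  shows "card (subtree_players s j k) = 2^j"
proof -
  have "inj_on s {k*2^j..<(k+1)*2^j}"
    by (rule inj_on_subset[OF inj_on_seeding]) (use assms in auto)
  then show ?thesis
    unfolding subtree_players_def by (simp add: card_image algebra_simps)
qed

lemma disjoint_subtree_players:
  assumes "t \<noteq> q" "(t+1)*2^j \<le> card V" "(q+1)*2^j \<le> card V"
  shows "subtree_players s j t \<inter> subtree_players s j q = {}"
proof -
  have "x div 2^j = u" if "x \<in> {u*2^j..<(u+1)*2^j}" for x u :: nat
    using that by (intro div_nat_eqI) (simp_all add: mult.commute)
  then have "{t*2^j..<(t+1)*2^j} \<inter> {q*2^j..<(q+1)*2^j} = {}"
    using assms(1) by blast
  moreover have "s ` ({t*2^j..<(t+1)*2^j} \<inter> {q*2^j..<(q+1)*2^j}) = subtree_players s j t \<inter> subtree_players s j q"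
    unfolding subtree_players_def using assms(2,3) by (intro inj_on_image_Int[OF inj_on_seeding]) auto
  ultimately show ?thesis
    by (metis image_empty)
qed

lemma ko_win_Suc_beats_child:
  assumes "(k+1)*2^Suc j \<le> card V" "c div 2 = k" "ko_win E s j c \<noteq> ko_win E s (Suc j) k"
  shows "(ko_win E s (Suc j) k, ko_win E s j c) \<in> E"
proof -
  have "c = 2*k \<or> c = 2*k+1"
    using assms(2) by presburger
  then have "ko_win E s j c \<in> {ko_win E s j (2*k), ko_win E s j (2*k+1)}"
    by blast
  moreover have "(2*k+1)*2^j \<le> card V" "(2*k+1+1)*2^j \<le> card V"
    using assms(1) by (simp_all add: algebra_simps)
  then have "ko_win E s j (2*k) \<in> V" "ko_win E s j (2*k+1) \<in> V"
    using ko_win_in_V by (metis add.commute)+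
  ultimately show ?thesis
    using match_winner_beats[OF is_tournament] assms(3) unfolding ko_win.simps(2) by blast
qed

end

section \<open>A block that loses only one match to outsiders\<close>

locale knockout_with_block = knockout +
  fixes B :: "'a set" and a b :: 'a
  assumes block_loses_outside_only_b_to_a:
    "\<And>x y. x \<in> B \<Longrightarrow> y \<in> V \<Longrightarrow> y \<notin> B \<Longrightarrow> (y,x) \<in> E \<Longrightarrow> y = a \<and> x = b"
begin

lemma block_child_beaten_by_outsider:
  assumes "(k+1)*2^Suc j \<le> card V" "c div 2 = k"
    and "ko_win E s j c \<in> B" "ko_win E s (Suc j) k \<notin> B"
  shows "ko_win E s j c = b" "ko_win E s (Suc j) k = a"
proof -
  have "ko_win E s j c \<noteq> ko_win E s (Suc j) k"
    using assms(3,4) by metis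
  from block_loses_outside_only_b_to_a[OF assms(3) ko_win_in_V[OF assms(1)] assms(4)
      ko_win_Suc_beats_child[OF assms(1,2) this]]
  show "ko_win E s j c = b" "ko_win E s (Suc j) k = a"
    by blast+
qed

lemma ko_win_in_block:
  assumes "(k+1)*2^j \<le> card V" "b \<notin> subtree_players s j k" "subtree_players s j k \<inter> B \<noteq> {}"
  shows "ko_win E s j k \<in> B"
  using assms
proof (induction j arbitrary: k)
  case 0
  then show ?case
    by (simp add: subtree_players_def)
next
  case (Suc j)
  obtain c where "c \<in> {2*k, 2*k+1}" "subtree_players s j c \<inter> B \<noteq> {}"
    using Suc.prems(3) subtree_players_Suc[of s j k] by blast
  then have c: "c div 2 = k" "subtree_players s j c \<inter> B \<noteq> {}"
    by auto
  have sub: "subtree_players s j c \<subseteq> subtree_players s (Suc j) k"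
    using subtree_players_ancestor[of s j c 1] c(1) by simp
  have "(c+1)*2^j \<le> card V"
    using Suc.prems(1) subtree_descendant_fits[of c 1 j] c(1) by simp
  then have "ko_win E s j c \<in> B"
    using Suc.IH Suc.prems(2) sub c(2) by blast
  then show ?case
    using block_child_beaten_by_outsider(1)[OF Suc.prems(1) c(1)] Suc.prems(2) sub
      ko_win_in_subtree_players[of E s j c] by blast
qed

lemma block_eliminated_by_a:
  assumes "(k+1)*2^j \<le> card V" "ko_win E s j k \<notin> B" "subtree_players s j k \<inter> B \<noteq> {}"
  shows "\<exists>i q. i < j \<and> q div 2^(j-i) = k \<and> ko_win E s i q = b \<and> ko_win E s (Suc i) (q div 2) = a
           \<and> subtree_players s j k \<inter> B \<subseteq> subtree_players s i q"
  using assms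
proof (induction j arbitrary: k)
  case 0
  then show ?case
    by (simp add: subtree_players_def)
next
  case (Suc j)
  have "b \<in> subtree_players s (Suc j) k"
    using ko_win_in_block Suc.prems by blast
  then obtain c c' where cc': "{c, c'} = {2*k, 2*k+1}" "b \<in> subtree_players s j c"
    using subtree_players_Suc[of s j k] by blast
  then have children: "c div 2 = k" "c' div 2 = k" "c \<noteq> c'"
    and split: "subtree_players s (Suc j) k = subtree_players s j c \<union> subtree_players s j c'"
    using subtree_players_Suc[of s j k] by (auto simp: doubleton_eq_iff)
  have fits: "(c+1)*2^j \<le> card V" "(c'+1)*2^j \<le> card V"
    using Suc.prems(1) subtree_descendant_fits[of _ 1 j] children by simp_all
  have "b \<notin> subtree_players s j c'"
    using disjoint_subtree_players[OF children(3) fits] cc'(2) by blast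
  then have "subtree_players s j c' \<inter> B = {}"
    using ko_win_in_block[OF fits(2)] block_child_beaten_by_outsider(1)[OF Suc.prems(1) children(2) _ Suc.prems(2)]
      ko_win_in_subtree_players[of E s j c'] by metis
  then have block_part: "subtree_players s (Suc j) k \<inter> B = subtree_players s j c \<inter> B"
    using split by blast
  show ?case
  proof (cases "ko_win E s j c \<in> B")
    case True
    then show ?thesis
      using block_child_beaten_by_outsider[OF Suc.prems(1) children(1) True Suc.prems(2)] block_part children(1)
      by (intro exI[of _ j] exI[of _ c]) auto
  next
    case False
    then obtain i q where iq: "i < j" "q div 2^(j-i) = c" "ko_win E s i q = b" "ko_win E s (Suc i) (q div 2) = a"
      "subtree_players s j c \<inter> B \<subseteq> subtree_players s i q"
      using Suc.IH[OF fits(1)] block_part Suc.prems(3) by auto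
    moreover have "q div 2^(Suc j - i) = k"
      using iq(1,2) children(1) by (metis Suc_diff_le div_mult2_eq less_imp_le power_Suc2)
    ultimately show ?thesis
      using block_part by (intro exI[of _ i] exI[of _ q]) auto
  qed
qed

lemma block_is_subtree:
  assumes "card V = 2^(p+2)" "card B = 2^p" "B \<subseteq> V" "ko_win E s (p+2) 0 \<notin> insert a B"
  obtains q where "q < 4" "subtree_players s p q = B" "ko_win E s p q = b"
    and "ko_win E s (Suc p) (q div 2) = a"
proof -
  have "B \<noteq> {}"
    using assms(2) by auto
  then obtain i q where iq: "i < p+2" "q div 2^(p+2-i) = 0" "ko_win E s i q = b"
    "ko_win E s (Suc i) (q div 2) = a" "B \<subseteq> subtree_players s i q"
    using block_eliminated_by_a[of 0 "p+2"] subtree_players_root[OF assms(1)] assms(1,3,4) by auto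
  have fits: "(q+1)*2^i \<le> card V"
    using subtree_descendant_fits[of q "p+2-i" i] iq(1,2) assms(1) by simp
  have "2^p \<le> card (subtree_players s i q)"
    using card_mono[OF _ iq(5)] assms(2) by (simp add: subtree_players_def)
  then have "p \<le> i"
    using card_subtree_players[OF fits] by simp
  moreover have "i \<noteq> p+1"
  proof
    assume "i = p+1"
    then have "q div 2 = 0"
      using iq(2) by simp
    then show False
      using iq(4) assms(4) \<open>i = p+1\<close> by simp
  qed
  ultimately have "i = p"
    using iq(1) by simp
  moreover have "subtree_players s i q = B"
    using card_subset_eq[OF _ iq(5)] card_subtree_players[OF fits] assms(2) \<open>i = p\<close>
    by (simp add: subtree_players_def)
  moreover have "q < 4"
    using iq(2) \<open>i = p\<close> by (simp add: div_eq_0_iff)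
  ultimately show thesis
    using that iq(3,4) by blast
qed

context
  fixes p :: nat
  assumes card_V: "card V = 2^(p+2)" and card_B: "card B = 2^p" and B_subset: "B \<subseteq> V"
    and champion_outside: "ko_win E s (p+2) 0 \<notin> insert a B"
begin

lemma quarter_fits: "t < 4 \<Longrightarrow> (t+1)*2^p \<le> card V"
  using card_V by (simp add: power_add)

lemma quarter_inter_block:
  assumes "t < 4" "subtree_players s p t \<inter> B \<noteq> {}"
  shows "subtree_players s p t = B" "ko_win E s p t = b"
proof -
  obtain q where q: "q < 4" "subtree_players s p q = B" "ko_win E s p q = b"
    using block_is_subtree card_V card_B B_subset champion_outside by blast
  have "t = q"
  proof (rule ccontr)
    assume "t \<noteq> q"
    then show False
      using disjoint_subtree_players[OF _ quarter_fits[OF assms(1)] quarter_fits[OF q(1)]] q(2) assms(2)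
      by simp
  qed
  then show "subtree_players s p t = B" "ko_win E s p t = b"
    using q by simp_all
qed

lemma early_match_inside_or_outside_block:
  assumes "r \<in> {1..p}" "(x,y) \<in> match_set E s (card V) r"
  shows "(x \<in> B \<and> y \<in> B) \<or> (x \<in> V - B \<and> y \<in> V - B)"
proof -
  obtain k where k: "k < card V div 2^r" "{x,y} \<subseteq> subtree_players s r k"
    using match_set_in_subtree_players assms by (metis atLeastAtMost_iff)
  define t where "t = k div 2^(p-r)"
  have "{x,y} \<subseteq> subtree_players s p t"
    using k(2) subtree_players_ancestor[of s r k "p-r"] assms(1) unfolding t_def by auto
  moreover have "card V = 2^(p-r) * 4 * 2^r"
    using card_V assms(1) by (simp flip: power_add)
  then have "card V div 2^r = 2^(p-r) * 4"
    by simp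
  then have "t < 4"
    using k(1) unfolding t_def by (simp add: less_mult_imp_div_less)
  ultimately show ?thesis
    using quarter_inter_block(1) subtree_players_subset[OF quarter_fits] by blast
qed

lemma semifinalists: "match_players (match_set E s (card V) (p+1)) = ko_win E s p ` {..<4}"
  using match_players_match_set[of E s "card V" "p+1"] card_V by simp

lemma semifinalists_subset: "match_players (match_set E s (card V) (p+1)) \<subseteq> V"
  unfolding semifinalists using ko_win_in_V[OF quarter_fits] by auto

lemma semifinalists_inter_block: "match_players (match_set E s (card V) (p+1)) \<inter> B = {b}"
proof (intro equalityI subsetI)
  fix x assume "x \<in> match_players (match_set E s (card V) (p+1)) \<inter> B"
  then obtain t where "t < 4" "x = ko_win E s p t" "x \<in> B"
    unfolding semifinalists by auto
  then show "x \<in> {b}"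
    using quarter_inter_block(2) ko_win_in_subtree_players[of E s p t] by blast
next
  fix x assume "x \<in> {b}"
  obtain q where "q < 4" "subtree_players s p q = B" "ko_win E s p q = b"
    using block_is_subtree card_V card_B B_subset champion_outside by blast
  then show "x \<in> match_players (match_set E s (card V) (p+1)) \<inter> B"
    using \<open>x \<in> {b}\<close> ko_win_in_subtree_players[of E s p q] unfolding semifinalists by auto
qed

lemma a_semifinalist: "a \<in> match_players (match_set E s (card V) (p+1))"
proof -
  obtain q where "q < 4" "ko_win E s (Suc p) (q div 2) = a"
    using block_is_subtree card_V card_B B_subset champion_outside by blast
  moreover from \<open>q < 4\<close> have "q div 2 < 2"
    by simp
  then have "2*(q div 2) \<in> {..<4}" "2*(q div 2)+1 \<in> {..<4}"
    unfolding lessThan_iff by linarith+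
  ultimately show ?thesis
    using ko_win_Suc_in[of E s p "q div 2"] unfolding semifinalists by blast
qed

lemma champion_semifinalist: "ko_win E s (p+2) 0 \<in> match_players (match_set E s (card V) (p+1))"
  using ko_win_Suc_in[of E s "Suc p" 0] ko_win_Suc_in[of E s p 0] ko_win_Suc_in[of E s p 1]
  unfolding semifinalists by auto

lemma card_semifinalists: "card (match_players (match_set E s (card V) (p+1))) = 4"
proof -
  have "inj_on (ko_win E s p) {..<4}"
  proof (rule inj_onI, rule ccontr)
    fix t u assume "t \<in> {..<4}" "u \<in> {..<4}" "ko_win E s p t = ko_win E s p u" "t \<noteq> u"
    then show False
      using disjoint_subtree_players[OF \<open>t \<noteq> u\<close> quarter_fits quarter_fits]
        ko_win_in_subtree_players[of E s p t] ko_win_in_subtree_players[of E s p u] by auto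
  qed
  then show ?thesis
    unfolding semifinalists by (simp add: card_image)
qed

lemma card_semifinalists_outside_block:
  "card (match_players (match_set E s (card V) (p+1)) - insert (ko_win E s (p+2) 0) B) = 2"
proof -
  let ?P = "match_players (match_set E s (card V) (p+1))"
  have "?P - insert (ko_win E s (p+2) 0) B = ?P - {b, ko_win E s (p+2) 0}"
    using semifinalists_inter_block by (auto simp del: ko_win.simps)
  moreover have "b \<noteq> ko_win E s (p+2) 0"
    using semifinalists_inter_block champion_outside by blast
  then have "card {b, ko_win E s (p+2) 0} = 2"
    by simp
  moreover have "{b, ko_win E s (p+2) 0} \<subseteq> ?P"
    using champion_semifinalist semifinalists_inter_block by blast
  ultimately show ?thesis
    using card_semifinalists by (simp add: card_Diff_subset del: ko_win.simps)
qed

end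

end

theorem lemma1:
  fixes V :: "'a set" and E :: "('a \<times> 'a) set" and v a b :: 'a
    and s :: "nat \<Rightarrow> 'a" and p :: nat
  assumes "TFP_instance V E v"
    and "special V E v a b"
    and "card (N_in E v) = 2 ^ p"
    and "yes_instance V E v"
    and "winning_seeding V E v s"
  shows "match_players (match_set E s (card V) (p+1)) \<inter> N_in E v = {b}
    \<and> (card (match_players (match_set E s (card V) (p+1)) \<inter> N_out E v) = 2
         \<and> a \<in> match_players (match_set E s (card V) (p+1)))
    \<and> (\<forall>r\<in>{1..p}. \<forall>(x,y)\<in>match_set E s (card V) r.
           (x \<in> N_out E v \<union> {v} \<and> y \<in> N_out E v \<union> {v}) \<or> (x \<in> N_in E v \<and> y \<in> N_in E v))"
proof -
  (* The hypothesis yes_instance V E v is implied by the winning seeding s and not needed. *)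
  let ?P = "match_players (match_set E s (card V) (p+1))"
  have tour: "tournament V E" and "v \<in> V"
    using assms(1) unfolding TFP_instance_def by auto
  note partition = tournament_neighbourhoods[OF tour \<open>v \<in> V\<close>]
  have card_V: "card V = 2^(p+2)"
    using card_tournament[OF tour \<open>v \<in> V\<close>] assms(2,3) unfolding special_def by simp
  obtain c where "seeding V s" "card V = 2^c" "ko_win E s c 0 = v"
    using assms(5) unfolding winning_seeding_def by blast
  moreover from this(2) have "c = p+2"
    using card_V by (metis Suc_1 lessI power_inject_exp)
  ultimately have champion: "ko_win E s (p+2) 0 = v"
    by simp
  interpret knockout_with_block V E s "N_in E v" a b
    using tour \<open>seeding V s\<close> special_in_neighbours_lose_only_b_to_a[OF tour assms(2)]
    by unfold_locales
  have "N_in E v \<subseteq> V" "ko_win E s (p+2) 0 \<notin> insert a (N_in E v)"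
    using partition assms(2) champion unfolding special_def by auto
  note quarter_facts = card_V assms(3) this
  have "?P \<inter> N_out E v = ?P - insert v (N_in E v)"
    using semifinalists_subset[OF quarter_facts] partition by blast
  then have "card (?P \<inter> N_out E v) = 2"
    using card_semifinalists_outside_block[OF quarter_facts] champion by simp
  moreover have "(x \<in> N_out E v \<union> {v} \<and> y \<in> N_out E v \<union> {v}) \<or> (x \<in> N_in E v \<and> y \<in> N_in E v)"
    if "r \<in> {1..p}" "(x,y) \<in> match_set E s (card V) r" for r x y
    using early_match_inside_or_outside_block[OF quarter_facts that] partition(1) by blast
  ultimately show ?thesis
    using semifinalists_inter_block[OF quarter_facts] a_semifinalist[OF quarter_facts] by blast
qed

end
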